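(* Let $\{a^1,\ldots,a^n\}\subseteq \mathbb{Z}^m$, let $C:=\operatorname{cone}\{a^1,\ldots,a^n\}$, and let $p$ be a prime. Then $\{a^1,\ldots,a^n\}$ is a $p$-adic generating set for a cone if, and only if, for every nonempty face $F$ of $C$, the set $\{a^i:a^i\in F\}$ is a $p$-adic generating set for a subspace.
   Context: A $p$-adic rational is a number $a/p^k$ with $a,k\in\mathbb{Z}$, $k\ge0$; a vector is $p$-adic if all entries are $p$-adic rationals. A finite set $S\subseteq\mathbb{Z}^m$ is a $p$-adic generating set for a cone if every integral vector in the conic hull of $S$ is a conic combination of the elements of $S$ with $p$-adic coefficients; it is a $p$-adic generating set for a subspace if every integral vector in the linear hull of $S$ is a linear combination of the elements of $S$ with $p$-adic coefficients. *)

theory Defs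
  imports "HOL-Analysis.Analysis" "HOL-Computational_Algebra.Primes"
begin

definition padic_rat :: "nat \<Rightarrow> real \<Rightarrow> bool" where
  "padic_rat p x \<longleftrightarrow> (\<exists>(a::int) (k::nat). x = of_int a / (real p) ^ k)"

definition integral_vec :: "real ^ 'm \<Rightarrow> bool" where
  "integral_vec x \<longleftrightarrow> (\<forall>i. x $ i \<in> \<int>)"

definition padic_gen_cone :: "nat \<Rightarrow> (real ^ 'm) set \<Rightarrow> bool" where
  "padic_gen_cone p S \<longleftrightarrow>
     (\<forall>x. integral_vec x \<and> x \<in> convex_cone hull S \<longrightarrow>
        (\<exists>c. (\<forall>s\<in>S. c s \<ge> 0 \<and> padic_rat p (c s)) \<and> x = (\<Sum>s\<in>S. c s *\<^sub>R s)))"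

definition padic_gen_subspace :: "nat \<Rightarrow> (real ^ 'm) set \<Rightarrow> bool" where
  "padic_gen_subspace p S \<longleftrightarrow>
     (\<forall>x. integral_vec x \<and> x \<in> span S \<longrightarrow>
        (\<exists>c. (\<forall>s\<in>S. padic_rat p (c s)) \<and> x = (\<Sum>s\<in>S. c s *\<^sub>R s)))"

end

theory Submission
  imports Defs
begin

text \<open>
  Necessity: an integral \<open>x\<close> in the span of the generators \<open>W\<close> lying in a face \<open>F\<close>
  becomes, after adding a large integer multiple of \<open>\<Sum>W\<close>, an integral point of
  \<open>cone W \<subseteq> F\<close>. A \<open>p\<close>-adic conic representation of it can only use generators in
  \<open>F\<close>, because \<open>F\<close> is a face; subtracting the multiple again gives \<open>p\<close>-adic
  coefficients on \<open>W\<close>.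

  Sufficiency: for an integral \<open>x\<close> in the cone take a conic representation \<open>\<theta>\<close> of maximal
  support \<open>T\<close> (an average of representations). Maximality makes \<open>cone T\<close> a face whose
  generators are exactly \<open>T\<close>, so \<open>x = \<Sum>s\<in>T. \<mu> s *\<^sub>R s\<close> with \<open>p\<close>-adic \<open>\<mu>\<close>.
  Then \<open>\<theta> - \<mu>\<close> is a linear relation among the integral vectors \<open>T\<close>; such relations are
  spanned by integer relations, so the \<open>p\<close>-adic ones are dense among them. Adding to \<open>\<mu>\<close> a
  \<open>p\<close>-adic relation close to \<open>\<theta> - \<mu>\<close> keeps the sum \<open>x\<close> and makes every coefficient
  close to \<open>\<theta> s > 0\<close>. Primality of \<open>p\<close> is used only through \<open>2 \<le> p\<close>.
\<close>

definition conic_repr :: "'a::real_vector set \<Rightarrow> 'a \<Rightarrow> ('a \<Rightarrow> real) \<Rightarrow> bool" where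
  "conic_repr S x c \<longleftrightarrow> (\<forall>s\<in>S. 0 \<le> c s) \<and> x = (\<Sum>s\<in>S. c s *\<^sub>R s)"

lemma sum_nonneg_scaleR_in_convex_cone_hull:
  assumes "finite A" "A \<subseteq> S" "\<And>a. a \<in> A \<Longrightarrow> 0 \<le> c a"
  shows "(\<Sum>a\<in>A. c a *\<^sub>R a) \<in> convex_cone hull S"
  using assms by (induction A rule: finite_induct)
    (auto intro: convex_cone_hull_add convex_cone_hull_contains_0 convex_cone_hull_mul hull_inc)

lemma convex_cone_hull_finite:
  assumes "finite S"
  shows "x \<in> convex_cone hull S \<longleftrightarrow> (\<exists>c. conic_repr S x c)"
proof
  assume "x \<in> convex_cone hull S"
  then consider "x = 0" | y t where "y \<in> convex hull S" "0 \<le> t" "x = t *\<^sub>R y"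
    unfolding convex_cone_hull_convex_hull by auto
  then show "\<exists>c. conic_repr S x c"
  proof cases
    case 1
    then show ?thesis unfolding conic_repr_def by (auto intro!: exI[of _ "\<lambda>_. 0"])
  next
    case 2
    moreover obtain u where "\<forall>s\<in>S. 0 \<le> u s" "y = (\<Sum>s\<in>S. u s *\<^sub>R s)"
      using 2 convex_hull_finite[OF assms] by auto
    ultimately show ?thesis
      unfolding conic_repr_def by (auto intro!: exI[of _ "\<lambda>s. t * u s"] simp: scaleR_sum_right)
  qed
next
  assume "\<exists>c. conic_repr S x c"
  then show "x \<in> convex_cone hull S"
    unfolding conic_repr_def using assms by (auto intro: sum_nonneg_scaleR_in_convex_cone_hull)
qed

lemma convex_cone_hull_subset_finite:
  assumes "finite S" "T \<subseteq> S"
  shows "x \<in> convex_cone hull T \<longleftrightarrow> (\<exists>c. conic_repr S x c \<and> (\<forall>s\<in>S - T. c s = 0))"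
proof
  have T: "finite T" using assms finite_subset by blast
  assume "x \<in> convex_cone hull T"
  then obtain c where c: "conic_repr T x c"
    using convex_cone_hull_finite[OF T] by blast
  define c' where "c' s = (if s \<in> T then c s else 0)" for s
  have "(\<Sum>s\<in>S. c' s *\<^sub>R s) = (\<Sum>s\<in>T. c s *\<^sub>R s)"
    using assms by (simp add: c'_def if_distrib[of "\<lambda>r. r *\<^sub>R _"] sum.inter_restrict[symmetric]
        Int_absorb1 cong: if_cong)
  then have "conic_repr S x c'"
    using c unfolding conic_repr_def c'_def by auto
  then show "\<exists>c. conic_repr S x c \<and> (\<forall>s\<in>S - T. c s = 0)"
    unfolding c'_def by auto
next
  assume "\<exists>c. conic_repr S x c \<and> (\<forall>s\<in>S - T. c s = 0)"
  then obtain c where c: "conic_repr S x c" "\<forall>s\<in>S - T. c s = 0" by blast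
  then have "conic_repr T x c"
    using assms unfolding conic_repr_def by (auto intro: sum.mono_neutral_right)
  then show "x \<in> convex_cone hull T"
    using convex_cone_hull_finite assms finite_subset by blast
qed

lemma span_shift_into_convex_cone_hull:
  assumes "finite W" "x \<in> span W"
  obtains N :: nat where "x + real N *\<^sub>R (\<Sum>w\<in>W. w) \<in> convex_cone hull W"
proof -
  obtain d where x: "x = (\<Sum>w\<in>W. d w *\<^sub>R w)"
    using assms span_finite by blast
  obtain N :: nat where N: "(\<Sum>w\<in>W. \<bar>d w\<bar>) \<le> real N"
    using real_arch_simple by blast
  have "0 \<le> d w + real N" if "w \<in> W" for w
    using member_le_sum[of w W "\<lambda>w. \<bar>d w\<bar>"] that assms N by auto
  then have "conic_repr W (x + real N *\<^sub>R (\<Sum>w\<in>W. w)) (\<lambda>w. d w + real N)"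
    unfolding conic_repr_def x by (auto simp: scaleR_add_left sum.distrib scaleR_sum_right)
  then show thesis
    using that convex_cone_hull_finite[OF assms(1)] by blast
qed

lemma face_of_convex_cone_imp_convex_cone:
  assumes "F face_of C" "convex_cone C" "F \<noteq> {}"
  shows "convex_cone F"
  using assms face_of_conic face_of_imp_convex unfolding convex_cone_def by blast

lemma face_of_convex_cone_add_imp_left:
  assumes F: "F face_of C" and "convex_cone C" and u: "u \<in> C" and v: "v \<in> C" and uv: "u + v \<in> F"
  shows "u \<in> F"
proof -
  have "conic F" using assms face_of_conic unfolding convex_cone_def by blast
  then have mid: "midpoint u v \<in> F"
    using uv unfolding midpoint_def by (simp add: conic_mul)
  show ?thesis
  proof (cases "u = v")
    case True
    with mid show ?thesis by simp
  next
    case False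
    with mid F u v show ?thesis by (meson face_ofD midpoint_in_open_segment)
  qed
qed

lemma face_of_convex_cone_hull_coeff_pos:
  assumes S: "finite S" and F: "F face_of convex_cone hull S"
    and c: "conic_repr S x c" and x: "x \<in> F" and s: "s \<in> S" and pos: "0 < c s"
  shows "s \<in> F"
proof -
  have "x = c s *\<^sub>R s + (\<Sum>t\<in>S - {s}. c t *\<^sub>R t)"
    using c S s by (simp add: conic_repr_def sum.remove)
  moreover have "c s *\<^sub>R s \<in> convex_cone hull S"
    using s pos by (intro convex_cone_hull_mul hull_inc) auto
  moreover have "(\<Sum>t\<in>S - {s}. c t *\<^sub>R t) \<in> convex_cone hull S"
    using S c by (intro sum_nonneg_scaleR_in_convex_cone_hull) (auto simp: conic_repr_def)
  ultimately have "c s *\<^sub>R s \<in> F"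
    using face_of_convex_cone_add_imp_left[OF F convex_cone_convex_cone_hull] x by metis
  from conic_mul[OF face_of_conic[OF conic_convex_cone_hull F] this, of "1 / c s"] pos
  show ?thesis by simp
qed

subsection \<open>Integral vectors and \<open>p\<close>-adic rationals\<close>

lemma integral_vec_add: "integral_vec x \<Longrightarrow> integral_vec y \<Longrightarrow> integral_vec (x + y)"
  by (auto simp: integral_vec_def)

lemma integral_vec_scaleR: "k \<in> \<int> \<Longrightarrow> integral_vec x \<Longrightarrow> integral_vec (k *\<^sub>R x)"
  by (auto simp: integral_vec_def)

lemma integral_vec_sum:
  "(\<And>i. i \<in> I \<Longrightarrow> integral_vec (f i)) \<Longrightarrow> integral_vec (sum f I)"
  by (induction I rule: infinite_finite_induct) (auto simp: integral_vec_def)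

lemma padic_rat_of_int [simp]: "padic_rat p (of_int a)"
  unfolding padic_rat_def by (intro exI[of _ a] exI[of _ 0]) simp

lemma padic_rat_Ints: "x \<in> \<int> \<Longrightarrow> padic_rat p x"
  by (metis Ints_cases padic_rat_of_int)

lemma padic_rat_add:
  assumes "0 < p" "padic_rat p x" "padic_rat p y"
  shows "padic_rat p (x + y)"
proof -
  obtain a k b l where x: "x = of_int a / real p ^ k" and y: "y = of_int b / real p ^ l"
    using assms unfolding padic_rat_def by blast
  have "x + y = of_int (a * int p ^ l + b * int p ^ k) / real p ^ (k + l)"
    using assms(1) by (simp add: x y field_simps power_add)
  then show ?thesis unfolding padic_rat_def by blast
qed

lemma padic_rat_minus: "padic_rat p x \<Longrightarrow> padic_rat p (- x)"
  unfolding padic_rat_def by (metis minus_divide_left of_int_minus)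

lemma padic_rat_diff: "0 < p \<Longrightarrow> padic_rat p x \<Longrightarrow> padic_rat p y \<Longrightarrow> padic_rat p (x - y)"
  using padic_rat_add[of p x "- y"] padic_rat_minus[of p y] by simp

lemma padic_rat_mult:
  assumes "padic_rat p x" "padic_rat p y"
  shows "padic_rat p (x * y)"
proof -
  obtain a k b l where x: "x = of_int a / real p ^ k" and y: "y = of_int b / real p ^ l"
    using assms unfolding padic_rat_def by blast
  have "x * y = of_int (a * b) / real p ^ (k + l)"
    by (simp add: x y power_add)
  then show ?thesis unfolding padic_rat_def by blast
qed

lemma padic_rat_sum:
  "0 < p \<Longrightarrow> (\<And>i. i \<in> I \<Longrightarrow> padic_rat p (f i)) \<Longrightarrow> padic_rat p (sum f I)"
  by (induction I rule: infinite_finite_induct)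
    (auto intro: padic_rat_add padic_rat_Ints)

lemma padic_rat_dense:
  assumes p: "2 \<le> p" and \<delta>: "0 < \<delta>"
  obtains a where "padic_rat p a" "\<bar>a - y\<bar> < \<delta>"
proof -
  obtain k where k: "1 / \<delta> < real p ^ k"
    using real_arch_pow[of "real p" "1 / \<delta>"] p by auto
  have pk: "0 < real p ^ k" using p by simp
  define a where "a = of_int \<lfloor>y * real p ^ k\<rfloor> / real p ^ k"
  have "a \<le> y" "y < a + 1 / real p ^ k"
    using pk unfolding a_def by (auto simp: field_simps) linarith+
  moreover have "1 / real p ^ k < \<delta>" using k \<delta> pk by (simp add: field_simps)
  moreover have "padic_rat p a" unfolding a_def padic_rat_def by blast
  ultimately show thesis using that by force
qed

subsection \<open>\<open>p\<close>-adic approximation of linear relations\<close>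

interpretation real_over_rat: vector_space "\<lambda>(q::rat) (x::real). of_rat q * x"
  by unfold_locales (auto simp: algebra_simps of_rat_add of_rat_mult)

text \<open>Expand the values of \<open>d\<close> in a \<open>\<rat>\<close>-basis \<open>B\<close> of their span: the coordinate
  functionals are \<open>\<rat>\<close>-linear, so every integral relation satisfied by \<open>d\<close> is inherited
  by each coordinate.\<close>

lemma linear_relation_rational_decomposition:
  fixes T :: "(real ^ 'm) set" and d :: "real ^ 'm \<Rightarrow> real"
  assumes T: "finite T" and Tint: "\<forall>s\<in>T. integral_vec s"
    and ker: "(\<Sum>s\<in>T. d s *\<^sub>R s) = 0"
  obtains B :: "real set" and r :: "real \<Rightarrow> real ^ 'm \<Rightarrow> rat"
  where "finite B" "\<forall>s\<in>T. d s = (\<Sum>b\<in>B. of_rat (r b s) * b)"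
    "\<forall>b\<in>B. (\<Sum>s\<in>T. of_rat (r b s) *\<^sub>R s) = 0"
proof -
  obtain B where B: "B \<subseteq> d ` T" "real_over_rat.independent B" "d ` T \<subseteq> real_over_rat.span B"
    using real_over_rat.maximal_independent_subset[of "d ` T"] by blast
  have fB: "finite B" using B(1) T finite_subset by blast
  define r where "r b s = real_over_rat.representation B (d s) b" for b s
  have sp: "d s \<in> real_over_rat.span B" if "s \<in> T" for s using B(3) that by blast
  have "\<forall>s\<in>T. d s = (\<Sum>b\<in>B. of_rat (r b s) * b)"
    unfolding r_def using real_over_rat.sum_representation_eq[OF B(2) sp fB] by auto
  moreover have "(\<Sum>s\<in>T. of_rat (r b s) *\<^sub>R s) = 0" if b: "b \<in> B" for b
  proof (subst vec_eq_iff, intro allI)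
    fix i
    define z where "z s = \<lfloor>s $ i\<rfloor>" for s :: "real ^ 'm"
    have zs: "s $ i = of_int (z s)" if "s \<in> T" for s
      using Tint that unfolding integral_vec_def z_def by (metis floor_of_int Ints_cases)
    have "(\<Sum>s\<in>T. of_rat (of_int (z s)) * d s) = 0"
      using arg_cong[OF ker, of "\<lambda>v. v $ i"] zs by (simp add: mult.commute)
    then have "real_over_rat.representation B (\<Sum>s\<in>T. of_rat (of_int (z s)) * d s) b = 0"
      by (simp add: real_over_rat.representation_zero)
    moreover have "real_over_rat.representation B (\<Sum>s\<in>T. of_rat (of_int (z s)) * d s)
        = (\<lambda>b. \<Sum>s\<in>T. of_int (z s) * r b s)"
    proof -
      have "real_over_rat.representation B (\<Sum>s\<in>T. of_rat (of_int (z s)) * d s)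
          = (\<lambda>b. \<Sum>s\<in>T. real_over_rat.representation B (of_rat (of_int (z s)) * d s) b)"
        using sp by (intro real_over_rat.representation_sum[OF B(2)] real_over_rat.span_scale) auto
      also have "\<dots> = (\<lambda>b. \<Sum>s\<in>T. of_int (z s) * r b s)"
      proof (intro ext sum.cong refl)
        fix b s assume "s \<in> T"
        from real_over_rat.representation_scale[OF B(2) sp[OF this], of "of_int (z s)"]
        show "real_over_rat.representation B (of_rat (of_int (z s)) * d s) b = of_int (z s) * r b s"
          unfolding r_def by metis
      qed
      finally show ?thesis .
    qed
    ultimately have "of_rat (\<Sum>s\<in>T. of_int (z s) * r b s) = (0::real)" by simp
    then show "(\<Sum>s\<in>T. of_rat (r b s) *\<^sub>R s) $ i = 0 $ i"
      using zs by (simp add: of_rat_sum of_rat_mult mult.commute)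
  qed
  ultimately show thesis using that fB by blast
qed

lemma rat_common_denominator:
  fixes R :: "rat set"
  assumes "finite R"
  obtains M :: nat where "0 < M" "\<forall>q\<in>R. real M * of_rat q \<in> \<int>"
  using assms
proof (induction R arbitrary: thesis rule: finite_induct)
  case empty
  then show ?case by (metis empty_iff zero_less_one)
next
  case (insert q R)
  then obtain M :: nat where M: "0 < M" "\<forall>q\<in>R. real M * of_rat q \<in> \<int>" by blast
  obtain a den where qd: "quotient_of q = (a, den)" by (cases "quotient_of q")
  have den: "0 < den" using quotient_of_denom_pos[OF qd] .
  have "of_rat q = (of_int a / of_int den :: real)"
    using quotient_of_div[OF qd] by (simp add: of_rat_divide)
  then have "real (M * nat den) * of_rat q = of_int (int M * a)"
    using den by simp
  then have "real (M * nat den) * of_rat q \<in> \<int>"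
    by (simp only: Ints_of_int)
  moreover have "real (M * nat den) * of_rat q' \<in> \<int>" if "q' \<in> R" for q'
    using Ints_mult[OF Ints_of_int M(2)[rule_format, OF that], of den] den by (simp add: mult_ac)
  ultimately have "\<forall>q'\<in>insert q R. real (M * nat den) * of_rat q' \<in> \<int>"
    by blast
  moreover have "0 < M * nat den" using M(1) den by simp
  ultimately show ?case using insert.prems by blast
qed

lemma linear_relation_integer_decomposition:
  fixes T :: "(real ^ 'm) set" and d :: "real ^ 'm \<Rightarrow> real"
  assumes T: "finite T" and Tint: "\<forall>s\<in>T. integral_vec s"
    and ker: "(\<Sum>s\<in>T. d s *\<^sub>R s) = 0"
  obtains B :: "real set" and w :: "real \<Rightarrow> real" and z :: "real \<Rightarrow> real ^ 'm \<Rightarrow> real"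
  where "finite B" "\<forall>s\<in>T. d s = (\<Sum>b\<in>B. w b * z b s)" "\<forall>b\<in>B. \<forall>s\<in>T. z b s \<in> \<int>"
    "\<forall>b\<in>B. (\<Sum>s\<in>T. z b s *\<^sub>R s) = 0"
proof -
  obtain B r where B: "finite B" and dec: "\<forall>s\<in>T. d s = (\<Sum>b\<in>B. of_rat (r b s) * b)"
    and kerB: "\<forall>b\<in>B. (\<Sum>s\<in>T. of_rat (r b s) *\<^sub>R s) = 0"
    using linear_relation_rational_decomposition[OF T Tint ker] by blast
  have "finite ((\<lambda>(b, s). r b s) ` (B \<times> T))" using B T by simp
  then obtain M :: nat where M: "0 < M" "\<forall>q\<in>(\<lambda>(b, s). r b s) ` (B \<times> T). real M * of_rat q \<in> \<int>"
    by (rule rat_common_denominator)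
  define z where "z b s = real M * of_rat (r b s)" for b s
  have "\<forall>s\<in>T. d s = (\<Sum>b\<in>B. b / real M * z b s)"
    using dec M(1) unfolding z_def by (simp add: mult.commute)
  moreover have "\<forall>b\<in>B. \<forall>s\<in>T. z b s \<in> \<int>"
  proof (intro ballI)
    fix b s assume "b \<in> B" "s \<in> T"
    then have "r b s \<in> (\<lambda>(b, s). r b s) ` (B \<times> T)"
      by (intro image_eqI[where x = "(b, s)"]) simp_all
    then show "z b s \<in> \<int>" using M(2) unfolding z_def by blast
  qed
  moreover have "\<forall>b\<in>B. (\<Sum>s\<in>T. z b s *\<^sub>R s) = 0"
  proof
    fix b assume "b \<in> B"
    have "(\<Sum>s\<in>T. z b s *\<^sub>R s) = real M *\<^sub>R (\<Sum>s\<in>T. of_rat (r b s) *\<^sub>R s)"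
      unfolding z_def scaleR_sum_right by simp
    with kerB \<open>b \<in> B\<close> show "(\<Sum>s\<in>T. z b s *\<^sub>R s) = 0" by simp
  qed
  ultimately show thesis by (rule that[OF B])
qed

lemma padic_linear_relation_approx:
  fixes T :: "(real ^ 'm) set" and d :: "real ^ 'm \<Rightarrow> real"
  assumes T: "finite T" and Tint: "\<forall>s\<in>T. integral_vec s"
    and ker: "(\<Sum>s\<in>T. d s *\<^sub>R s) = 0" and p: "2 \<le> p" and \<epsilon>: "0 < \<epsilon>"
  obtains k where "\<forall>s\<in>T. padic_rat p (k s)" "(\<Sum>s\<in>T. k s *\<^sub>R s) = 0"
    "\<forall>s\<in>T. \<bar>k s - d s\<bar> < \<epsilon>"
proof -
  obtain B :: "real set" and w z where B: "finite B" and dec: "\<forall>s\<in>T. d s = (\<Sum>b\<in>B. w b * z b s)"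
    and zZ: "\<forall>b\<in>B. \<forall>s\<in>T. z b s \<in> \<int>" and kerB: "\<forall>b\<in>B. (\<Sum>s\<in>T. z b s *\<^sub>R s) = 0"
    using linear_relation_integer_decomposition[OF T Tint ker] by blast
  define C where "C = 1 + (\<Sum>s\<in>T. \<Sum>b\<in>B. \<bar>z b s\<bar>)"
  have C: "1 \<le> C" unfolding C_def by (simp add: sum_nonneg)
  have "0 < \<epsilon> / C" using \<epsilon> C by simp
  then have "\<forall>b. \<exists>a. padic_rat p a \<and> \<bar>a - w b\<bar> < \<epsilon> / C"
    using padic_rat_dense[OF p] by blast
  then obtain a where a: "\<And>b. padic_rat p (a b)" "\<And>b. \<bar>a b - w b\<bar> < \<epsilon> / C"
    by metis
  define k where "k s = (\<Sum>b\<in>B. a b * z b s)" for s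
  have "padic_rat p (k s)" if "s \<in> T" for s
    unfolding k_def
  proof (rule padic_rat_sum)
    show "0 < p" using p by simp
    fix b assume "b \<in> B"
    then show "padic_rat p (a b * z b s)"
      using padic_rat_mult[OF a(1) padic_rat_Ints] zZ that by blast
  qed
  moreover have "(\<Sum>s\<in>T. k s *\<^sub>R s) = 0"
  proof -
    have "(\<Sum>s\<in>T. k s *\<^sub>R s) = (\<Sum>b\<in>B. a b *\<^sub>R (\<Sum>s\<in>T. z b s *\<^sub>R s))"
      unfolding k_def scaleR_sum_left scaleR_sum_right by (subst sum.swap) simp
    then show ?thesis using kerB by simp
  qed
  moreover have "\<bar>k s - d s\<bar> < \<epsilon>" if s: "s \<in> T" for s
  proof -
    have "\<bar>k s - d s\<bar> = \<bar>\<Sum>b\<in>B. (a b - w b) * z b s\<bar>"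
      using dec s unfolding k_def by (simp add: sum_subtractf left_diff_distrib)
    also have "\<dots> \<le> (\<Sum>b\<in>B. \<bar>a b - w b\<bar> * \<bar>z b s\<bar>)"
      by (rule order_trans[OF sum_abs]) (simp add: abs_mult)
    also have "\<dots> \<le> (\<Sum>b\<in>B. \<epsilon> / C * \<bar>z b s\<bar>)"
      by (intro sum_mono mult_right_mono less_imp_le[OF a(2)]) simp
    also have "\<dots> = \<epsilon> / C * (\<Sum>b\<in>B. \<bar>z b s\<bar>)"
      by (simp add: sum_distrib_left)
    also have "\<dots> < \<epsilon> / C * C"
    proof (rule mult_strict_left_mono)
      have "(\<Sum>b\<in>B. \<bar>z b s\<bar>) \<le> (\<Sum>s\<in>T. \<Sum>b\<in>B. \<bar>z b s\<bar>)"
        using T s by (intro member_le_sum) (auto intro: sum_nonneg)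
      then show "(\<Sum>b\<in>B. \<bar>z b s\<bar>) < C" unfolding C_def by linarith
    qed fact
    also have "\<dots> = \<epsilon>" using C by simp
    finally show ?thesis .
  qed
  ultimately show thesis using that by blast
qed

subsection \<open>Representations of maximal support\<close>

lemma conic_repr_average:
  assumes "finite I" "I \<noteq> {}" "\<And>i. i \<in> I \<Longrightarrow> conic_repr S x (c i)"
  shows "conic_repr S x (\<lambda>s. (\<Sum>i\<in>I. c i s) / card I)"
proof -
  have n: "0 < real (card I)" using assms(1,2) by (simp add: card_gt_0_iff)
  have "(\<Sum>s\<in>S. ((\<Sum>i\<in>I. c i s) / card I) *\<^sub>R s) = (1 / card I) *\<^sub>R (\<Sum>s\<in>S. \<Sum>i\<in>I. c i s *\<^sub>R s)"
    by (simp add: scaleR_sum_right scaleR_sum_left sum_divide_distrib)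
  also have "\<dots> = (1 / card I) *\<^sub>R (\<Sum>i\<in>I. \<Sum>s\<in>S. c i s *\<^sub>R s)"
    by (subst sum.swap) (rule refl)
  also have "\<dots> = (1 / card I) *\<^sub>R (\<Sum>i\<in>I. x)"
    using assms(3) by (simp add: conic_repr_def)
  also have "\<dots> = x" using n by (simp add: sum_constant_scaleR)
  finally show ?thesis
    using assms(3) by (auto simp: conic_repr_def intro!: divide_nonneg_pos sum_nonneg n)
qed

lemma conic_repr_maximal_support:
  assumes "finite S" "x \<in> convex_cone hull S"
  obtains \<theta> where "conic_repr S x \<theta>"
    "\<And>c s. conic_repr S x c \<Longrightarrow> s \<in> S \<Longrightarrow> 0 < c s \<Longrightarrow> 0 < \<theta> s"
proof -
  obtain c0 where c0: "conic_repr S x c0"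
    using assms convex_cone_hull_finite by blast
  define pick where "pick s =
    (if \<exists>c. conic_repr S x c \<and> 0 < c s then SOME c. conic_repr S x c \<and> 0 < c s else c0)" for s
  have pick: "conic_repr S x (pick s) \<and> ((\<exists>c. conic_repr S x c \<and> 0 < c s) \<longrightarrow> 0 < pick s s)" for s
  proof (cases "\<exists>c. conic_repr S x c \<and> 0 < c s")
    case True
    then show ?thesis unfolding pick_def using someI_ex[OF True] by simp
  next
    case False
    then have "pick s = c0" unfolding pick_def by (rule if_not_P)
    with False c0 show ?thesis by simp
  qed
  show thesis
  proof (cases "S = {}")
    case True
    then show thesis using that c0 by blast
  next
    case False
    define \<theta> where "\<theta> s = (\<Sum>t\<in>S. pick t s) / card S" for s
    have "conic_repr S x \<theta>"
      unfolding \<theta>_def using assms(1) False pick by (blast intro: conic_repr_average)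
    moreover have "0 < \<theta> s" if "conic_repr S x c" "s \<in> S" "0 < c s" for c s
    proof -
      have "pick s s \<le> (\<Sum>t\<in>S. pick t s)"
        using assms(1) that(2) pick by (intro member_le_sum) (auto simp: conic_repr_def)
      moreover have "0 < pick s s" using pick that by blast
      ultimately show ?thesis
        using False assms(1) unfolding \<theta>_def
        by (simp add: card_gt_0_iff)
    qed
    ultimately show thesis using that by blast
  qed
qed

lemma exists_pos_scale_le:
  fixes \<nu> \<theta> :: "'a \<Rightarrow> real"
  assumes "finite S" "\<forall>s\<in>S. 0 \<le> \<theta> s" "\<forall>s\<in>S. 0 < \<nu> s \<longrightarrow> 0 < \<theta> s"
  obtains \<epsilon> where "0 < \<epsilon>" "\<forall>s\<in>S. \<epsilon> * \<nu> s \<le> \<theta> s"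
proof
  define \<epsilon> where "\<epsilon> = Min (insert 1 {\<theta> s / \<nu> s | s. s \<in> S \<and> 0 < \<nu> s})"
  have fin: "finite {\<theta> s / \<nu> s | s. s \<in> S \<and> 0 < \<nu> s}"
    using assms(1) by simp
  show "0 < \<epsilon>"
    unfolding \<epsilon>_def using fin assms(3) by (subst Min_gr_iff) auto
  show "\<forall>s\<in>S. \<epsilon> * \<nu> s \<le> \<theta> s"
  proof
    fix s assume s: "s \<in> S"
    show "\<epsilon> * \<nu> s \<le> \<theta> s"
    proof (cases "0 < \<nu> s")
      case True
      then have "\<epsilon> \<le> \<theta> s / \<nu> s" unfolding \<epsilon>_def using fin s by (intro Min_le) auto
      with True show ?thesis by (simp add: pos_le_divide_eq)
    next
      case False
      have "0 \<le> \<epsilon>" using \<open>0 < \<epsilon>\<close> by simp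
      with False s assms(2) show ?thesis by (meson mult_nonneg_nonpos not_less order_trans)
    qed
  qed
qed

text \<open>Since \<open>\<theta>\<close> is positive on the support of \<open>\<nu>\<close>, \<open>x - \<epsilon> z\<close> stays in the cone for
  small \<open>\<epsilon> > 0\<close>; adding \<open>\<epsilon> z\<close> back via \<open>\<gamma>\<close> yields a representation of \<open>x\<close> that is
  positive at \<open>s\<close>.\<close>

lemma support_subset_maximal_support:
  assumes S: "finite S" and \<theta>: "conic_repr S x \<theta>"
    and max: "\<And>c s. conic_repr S x c \<Longrightarrow> s \<in> S \<Longrightarrow> 0 < c s \<Longrightarrow> 0 < \<theta> s"
    and z: "z \<in> convex_cone hull {s \<in> S. 0 < \<theta> s}" and \<gamma>: "conic_repr S z \<gamma>"
    and s: "s \<in> S" "0 < \<gamma> s"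
  shows "0 < \<theta> s"
proof -
  obtain \<nu> where \<nu>: "conic_repr S z \<nu>" "\<forall>t\<in>S - {s \<in> S. 0 < \<theta> s}. \<nu> t = 0"
    using z convex_cone_hull_subset_finite[OF S, of "{s \<in> S. 0 < \<theta> s}"] by blast
  have "\<forall>t\<in>S. 0 \<le> \<theta> t" using \<theta> unfolding conic_repr_def by blast
  moreover have "\<forall>t\<in>S. 0 < \<nu> t \<longrightarrow> 0 < \<theta> t" using \<nu>(2) by force
  ultimately obtain \<epsilon> where \<epsilon>: "0 < \<epsilon>" "\<forall>t\<in>S. \<epsilon> * \<nu> t \<le> \<theta> t"
    using exists_pos_scale_le[OF S] by blast
  define c where "c t = \<theta> t - \<epsilon> * \<nu> t + \<epsilon> * \<gamma> t" for t
  have "(\<Sum>t\<in>S. c t *\<^sub>R t)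
      = (\<Sum>t\<in>S. \<theta> t *\<^sub>R t) - \<epsilon> *\<^sub>R (\<Sum>t\<in>S. \<nu> t *\<^sub>R t) + \<epsilon> *\<^sub>R (\<Sum>t\<in>S. \<gamma> t *\<^sub>R t)"
    unfolding c_def
    by (simp add: scaleR_add_left scaleR_diff_left sum.distrib sum_subtractf scaleR_sum_right)
  also have "\<dots> = x" using \<theta> \<nu>(1) \<gamma> by (simp add: conic_repr_def)
  moreover have "0 \<le> c t" if "t \<in> S" for t
  proof -
    have "0 \<le> \<epsilon> * \<gamma> t" using \<epsilon>(1) \<gamma> that by (simp add: conic_repr_def)
    with \<epsilon>(2) that show ?thesis unfolding c_def by fastforce
  qed
  ultimately have "conic_repr S x c" unfolding conic_repr_def by simp
  moreover have "0 < c s"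
  proof -
    have "0 < \<epsilon> * \<gamma> s" using \<epsilon>(1) s(2) by simp
    with \<epsilon>(2) s(1) show ?thesis unfolding c_def by fastforce
  qed
  ultimately show ?thesis using max s by blast
qed

lemma maximal_support_face_of:
  assumes S: "finite S" and \<theta>: "conic_repr S x \<theta>"
    and max: "\<And>c s. conic_repr S x c \<Longrightarrow> s \<in> S \<Longrightarrow> 0 < c s \<Longrightarrow> 0 < \<theta> s"
  defines "T \<equiv> {s \<in> S. 0 < \<theta> s}"
  shows "convex_cone hull T face_of convex_cone hull S"
    and "{a \<in> S. a \<in> convex_cone hull T} = T"
proof -
  have TS: "T \<subseteq> S" unfolding T_def by blast
  have absorb: "\<gamma> s = 0" if "z \<in> convex_cone hull T" "conic_repr S z \<gamma>" "s \<in> S - T" for z \<gamma> s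
  proof (rule ccontr)
    assume "\<gamma> s \<noteq> 0"
    with that(2,3) have "0 < \<gamma> s" by (auto simp: conic_repr_def less_le)
    with support_subset_maximal_support[OF S \<theta> max _ that(2)] that(1,3) show False
      unfolding T_def by auto
  qed
  show "convex_cone hull T face_of convex_cone hull S"
    unfolding face_of_def
  proof (intro conjI ballI impI)
    show "convex_cone hull T \<subseteq> convex_cone hull S" by (rule hull_mono[OF TS])
    show "convex (convex_cone hull T)" by (rule convex_convex_cone_hull)
    fix a b z assume a: "a \<in> convex_cone hull S" and b: "b \<in> convex_cone hull S"
      and z: "z \<in> convex_cone hull T" and seg: "z \<in> open_segment a b"
    obtain u where u: "0 < u" "u < 1" "z = (1 - u) *\<^sub>R a + u *\<^sub>R b"
      using seg unfolding in_segment by blast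
    obtain \<alpha> \<beta> where \<alpha>: "conic_repr S a \<alpha>" and \<beta>: "conic_repr S b \<beta>"
      using a b convex_cone_hull_finite[OF S] by blast
    have "conic_repr S z (\<lambda>s. (1 - u) * \<alpha> s + u * \<beta> s)"
      using \<alpha> \<beta> u unfolding conic_repr_def
      by (auto simp: scaleR_add_left sum.distrib scaleR_sum_right)
    then have "(1 - u) * \<alpha> s + u * \<beta> s = 0" if "s \<in> S - T" for s
      using absorb[OF z] that by blast
    moreover have "0 \<le> \<alpha> s" "0 \<le> \<beta> s" if "s \<in> S" for s
      using \<alpha> \<beta> that unfolding conic_repr_def by auto
    ultimately have "\<alpha> s = 0 \<and> \<beta> s = 0" if "s \<in> S - T" for s
      using u that by (auto simp: add_nonneg_eq_0_iff)
    then show "a \<in> convex_cone hull T" "b \<in> convex_cone hull T"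
      using \<alpha> \<beta> convex_cone_hull_subset_finite[OF S TS] by blast+
  qed
  show "{a \<in> S. a \<in> convex_cone hull T} = T"
  proof
    show "T \<subseteq> {a \<in> S. a \<in> convex_cone hull T}" using TS by (auto intro: hull_inc)
  next
    show "{a \<in> S. a \<in> convex_cone hull T} \<subseteq> T"
    proof safe
      fix s assume s: "s \<in> S" "s \<in> convex_cone hull T"
      have "conic_repr S s (\<lambda>t. if t = s then 1 else 0)"
        using S s unfolding conic_repr_def by (simp add: if_distrib[of "\<lambda>r. r *\<^sub>R _"] cong: if_cong)
      then show "s \<in> T" using absorb[OF s(2)] s(1) by fastforce
    qed
  qed
qed

lemma padic_gen_subspace_face_if_padic_gen_cone:
  fixes S :: "(real ^ 'm) set"
  assumes S: "finite S" and Sint: "\<forall>a\<in>S. integral_vec a" and p: "0 < p"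
    and cone: "padic_gen_cone p S"
    and F: "F face_of convex_cone hull S" and "F \<noteq> {}"
  shows "padic_gen_subspace p {a \<in> S. a \<in> F}"
  unfolding padic_gen_subspace_def
proof (intro allI impI, elim conjE)
  define W where "W = {a \<in> S. a \<in> F}"
  have W: "finite W" "W \<subseteq> S" "W \<subseteq> F" using S unfolding W_def by auto
  fix x assume x: "integral_vec x" "x \<in> span {a \<in> S. a \<in> F}"
  obtain N :: nat where yW: "x + real N *\<^sub>R (\<Sum>w\<in>W. w) \<in> convex_cone hull W"
    using span_shift_into_convex_cone_hull W(1) x(2) unfolding W_def by blast
  define y where "y = x + real N *\<^sub>R (\<Sum>w\<in>W. w)"
  have "convex_cone hull W \<subseteq> F"
    using face_of_convex_cone_imp_convex_cone[OF F convex_cone_convex_cone_hull \<open>F \<noteq> {}\<close>] W(3)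
    by (intro hull_minimal) auto
  then have yF: "y \<in> F" using yW unfolding y_def by blast
  have "y \<in> convex_cone hull S" using yW hull_mono[OF W(2)] unfolding y_def by blast
  moreover have "integral_vec y"
    unfolding y_def using x(1) Sint W by (intro integral_vec_add integral_vec_scaleR integral_vec_sum) auto
  ultimately obtain c where c: "\<forall>s\<in>S. 0 \<le> c s \<and> padic_rat p (c s)" and yc: "y = (\<Sum>s\<in>S. c s *\<^sub>R s)"
    using cone unfolding padic_gen_cone_def by blast
  have "c s = 0" if "s \<in> S - W" for s
  proof (rule ccontr)
    assume "c s \<noteq> 0"
    with c that have "0 < c s" by force
    then have "s \<in> F"
      using face_of_convex_cone_hull_coeff_pos[OF S F _ yF] c yc that by (auto simp: conic_repr_def)
    with that show False unfolding W_def by auto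
  qed
  then have "y = (\<Sum>s\<in>W. c s *\<^sub>R s)"
    unfolding yc using S W by (intro sum.mono_neutral_right) auto
  then have "x = (\<Sum>s\<in>W. c s *\<^sub>R s) - real N *\<^sub>R (\<Sum>w\<in>W. w)"
    unfolding y_def by (simp add: eq_diff_eq)
  also have "\<dots> = (\<Sum>s\<in>W. (c s - real N) *\<^sub>R s)"
    by (simp add: scaleR_diff_left sum_subtractf scaleR_sum_right)
  finally have "x = (\<Sum>s\<in>W. (c s - real N) *\<^sub>R s)" .
  moreover have "\<forall>s\<in>W. padic_rat p (c s - real N)"
    using c W by (blast intro: padic_rat_diff[OF p] padic_rat_Ints[OF Ints_of_nat])
  ultimately show "\<exists>c. (\<forall>s\<in>{a \<in> S. a \<in> F}. padic_rat p (c s)) \<and> x = (\<Sum>s\<in>{a \<in> S. a \<in> F}. c s *\<^sub>R s)"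
    unfolding W_def by (intro exI[of _ "\<lambda>s. c s - real N"]) simp
qed

lemma padic_gen_cone_if_padic_gen_subspace_faces:
  fixes S :: "(real ^ 'm) set"
  assumes S: "finite S" and Sint: "\<forall>a\<in>S. integral_vec a" and p: "2 \<le> p"
    and faces: "\<forall>F. F face_of convex_cone hull S \<and> F \<noteq> {} \<longrightarrow> padic_gen_subspace p {a \<in> S. a \<in> F}"
  shows "padic_gen_cone p S"
  unfolding padic_gen_cone_def
proof (intro allI impI, elim conjE)
  fix x assume x: "integral_vec x" "x \<in> convex_cone hull S"
  obtain \<theta> where \<theta>: "conic_repr S x \<theta>"
    and max: "\<And>c s. conic_repr S x c \<Longrightarrow> s \<in> S \<Longrightarrow> 0 < c s \<Longrightarrow> 0 < \<theta> s"
    using conic_repr_maximal_support[OF S x(2)] by blast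
  define T where "T = {s \<in> S. 0 < \<theta> s}"
  have TS: "T \<subseteq> S" and T: "finite T" using S unfolding T_def by auto
  have Tint: "\<forall>s\<in>T. integral_vec s" using Sint TS by blast
  have "convex_cone hull T face_of convex_cone hull S" "{a \<in> S. a \<in> convex_cone hull T} = T"
    using maximal_support_face_of[OF S \<theta> max] unfolding T_def by auto
  then have "padic_gen_subspace p T"
    using faces convex_cone_hull_nonempty by metis
  moreover have xT: "x = (\<Sum>s\<in>T. \<theta> s *\<^sub>R s)"
    using \<theta> S TS unfolding conic_repr_def T_def
    by (auto intro!: sum.mono_neutral_right simp: less_le)
  then have "x \<in> span T" by (auto intro: span_sum span_mul span_base)
  ultimately obtain \<mu> where \<mu>: "\<forall>s\<in>T. padic_rat p (\<mu> s)" "x = (\<Sum>s\<in>T. \<mu> s *\<^sub>R s)"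
    using x(1) unfolding padic_gen_subspace_def by blast
  define d where "d s = \<theta> s - \<mu> s" for s
  have ker: "(\<Sum>s\<in>T. d s *\<^sub>R s) = 0"
    using xT \<mu>(2) unfolding d_def by (simp add: scaleR_diff_left sum_subtractf)
  define \<epsilon> where "\<epsilon> = Min (insert 1 (\<theta> ` T))"
  have \<epsilon>: "0 < \<epsilon>" "\<forall>s\<in>T. \<epsilon> \<le> \<theta> s"
    using T unfolding \<epsilon>_def T_def by auto
  obtain k where k: "\<forall>s\<in>T. padic_rat p (k s)" "(\<Sum>s\<in>T. k s *\<^sub>R s) = 0"
    "\<forall>s\<in>T. \<bar>k s - d s\<bar> < \<epsilon>"
    using padic_linear_relation_approx[OF T Tint ker p \<epsilon>(1)] by blast
  define c where "c s = (if s \<in> T then \<mu> s + k s else 0)" for s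
  have "0 \<le> c s" if "s \<in> S" for s
    using k(3) \<epsilon>(2) unfolding c_def d_def by fastforce
  moreover have "padic_rat p (c s)" for s
    using \<mu>(1) k(1) p unfolding c_def by (auto intro: padic_rat_add padic_rat_Ints)
  moreover have "x = (\<Sum>s\<in>S. c s *\<^sub>R s)"
  proof -
    have "(\<Sum>s\<in>S. c s *\<^sub>R s) = (\<Sum>s\<in>T. (\<mu> s + k s) *\<^sub>R s)"
      unfolding c_def using S TS by (intro sum.mono_neutral_cong_right) auto
    also have "\<dots> = x" using \<mu>(2) k(2) by (simp add: scaleR_add_left sum.distrib)
    finally show ?thesis by simp
  qed
  ultimately show "\<exists>c. (\<forall>s\<in>S. 0 \<le> c s \<and> padic_rat p (c s)) \<and> x = (\<Sum>s\<in>S. c s *\<^sub>R s)"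
    by blast
qed

theorem theorem1p2:
  fixes S :: "(real ^ 'm) set" and p :: nat
  assumes "finite S"
    and "\<forall>a\<in>S. integral_vec a"
    and "prime p"
  shows "padic_gen_cone p S \<longleftrightarrow>
    (\<forall>F. F face_of (convex_cone hull S) \<and> F \<noteq> {} \<longrightarrow>
         padic_gen_subspace p {a \<in> S. a \<in> F})"
proof
  have p: "2 \<le> p" using assms(3) by (rule prime_ge_2_nat)
  show "padic_gen_cone p S \<Longrightarrow> \<forall>F. F face_of convex_cone hull S \<and> F \<noteq> {} \<longrightarrow>
      padic_gen_subspace p {a \<in> S. a \<in> F}"
    using padic_gen_subspace_face_if_padic_gen_cone[OF assms(1,2)] p by simp
  show "\<forall>F. F face_of convex_cone hull S \<and> F \<noteq> {} \<longrightarrow> padic_gen_subspace p {a \<in> S. a \<in> F}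
      \<Longrightarrow> padic_gen_cone p S"
    by (rule padic_gen_cone_if_padic_gen_subspace_faces[OF assms(1,2) p])
qed

end
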